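(* Let $p$ be a prime and $n\ge1$. Let $N_n=\prod_{1\le h\le k\le n,\ \gcd(h,k)=1} h$ be the product of the numerators of all nonzero Farey fractions of order $n$ (each written in lowest terms). Then $$\mathrm{ord}_p(N_n)=\sum_{b=1}^{\lfloor\log_p n\rfloor}\ \sum_{a=1}^{\lfloor n/p^b\rfloor}\left(\varphi(ap^b)\Big(\Big\lfloor\frac{n}{ap^b}\Big\rfloor-1\Big)+\sum_{j\mid ap}\mu(j)\Big\lfloor\frac{d}{j}\Big\rfloor\right),$$ where, for each pair $(a,b)$, $d$ is the unique integer with $0\le d<ap^b$ and $d\equiv n\pmod{ap^b}$.
   Context: $\mathrm{ord}_p(m)$ is the exponent of the prime $p$ in the positive integer $m$; $\varphi$ is Euler's totient function, $\mu$ the M\"obius function, and the inner sum is over positive divisors $j$ of $ap$. *)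

theory Defs
  imports "HOL-Number_Theory.Number_Theory" "HOL-Computational_Algebra.Squarefree"
begin

definition moebius :: "nat \<Rightarrow> int" where
  "moebius j = (if squarefree j then (-1) ^ card (prime_factors j) else 0)"

definition farey_num_prod :: "nat \<Rightarrow> nat" where
  "farey_num_prod n = (\<Prod>(h, k) \<in> {(h, k). 1 \<le> h \<and> h \<le> k \<and> k \<le> n \<and> coprime h k}. h)"

end

theory Submission
  imports Defs
begin

text \<open>
  The multiplicity of \<open>p\<close> in \<open>N\<^sub>n\<close> is the sum of the multiplicities of the numerators \<open>h\<close>,
  i.e. the number of pairs \<open>(b, (h, k))\<close> with \<open>b \<ge> 1\<close> and \<open>p\<^sup>b\<close> dividing \<open>h\<close>. For
  \<open>h = a p\<^sup>b\<close> the partners \<open>k\<close> are the integers in \<open>[h, n]\<close> coprime to \<open>h\<close>. Counting the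
  integers in \<open>[1, x]\<close> coprime to \<open>m\<close> gives \<open>\<phi>(m)\<close> per full period of length \<open>m\<close>, plus
  \<open>\<Sum>\<^sub>j\<^sub>|\<^sub>m \<mu>(j) \<lfloor>d/j\<rfloor>\<close> on the remaining segment \<open>[1, d]\<close>; and since \<open>a p\<^sup>b\<close> and \<open>a p\<close>
  have the same prime divisors, \<open>m = a p\<^sup>b\<close> may be replaced by \<open>a p\<close> there.
\<close>

lemma moebius_prime_mult:
  assumes "prime q" "\<not> q dvd j" "j > 0"
  shows "moebius (q * j) = - moebius j"
proof -
  have "coprime q j" using assms by (simp add: prime_imp_coprime)
  then have "squarefree (q * j) \<longleftrightarrow> squarefree j"
    using assms squarefree_mult_coprime squarefree_multD(2) squarefree_prime by blast
  moreover have "prime_factors (q * j) = insert q (prime_factors j)"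
    using assms by (simp add: prime_factors_product prime_prime_factors)
  moreover have "q \<notin> prime_factors j" using assms(2) by auto
  ultimately show ?thesis by (simp add: moebius_def)
qed

text \<open>
  For a prime \<open>q\<close> dividing \<open>g\<close>, the divisors of \<open>g\<close> not divisible by \<open>q\<close> cancel against their
  \<open>q\<close>-multiples, and all other divisors are divisible by \<open>q\<^sup>2\<close>.
\<close>
lemma sum_moebius_divisors:
  fixes g :: nat
  assumes "g > 0"
  shows "(\<Sum>j | j dvd g. moebius j) = (if g = 1 then 1 else 0)"
proof (cases "g = 1")
  case True
  then show ?thesis by (simp add: moebius_def)
next
  case False
  then obtain q where q: "prime q" "q dvd g" using prime_factor_nat by blast
  define D where "D = {j. j dvd g \<and> \<not> q dvd j}"
  have fin: "finite {j. j dvd g}" using assms by simp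
  then have finD: "finite D" unfolding D_def by (rule rev_finite_subset) auto
  have multiples: "(*) q ` D \<subseteq> {j. j dvd g}"
    using q by (auto simp: D_def prime_imp_coprime divides_mult)
  have "(\<Sum>j | j dvd g. moebius j) = (\<Sum>j \<in> D \<union> (*) q ` D. moebius j)"
  proof (rule sum.mono_neutral_right[OF fin])
    show "D \<union> (*) q ` D \<subseteq> {j. j dvd g}" using multiples by (auto simp: D_def)
    show "\<forall>i \<in> {j. j dvd g} - (D \<union> (*) q ` D). moebius i = 0"
    proof
      fix i assume i: "i \<in> {j. j dvd g} - (D \<union> (*) q ` D)"
      then have "q dvd i" "i dvd g" by (auto simp: D_def)
      then obtain i' where i': "i = q * i'" by blast
      then have "q dvd i'" using i \<open>i dvd g\<close> by (auto simp: D_def dest: dvd_mult_right)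
      then have "q * q dvd i" using i' by simp
      then have "\<not> squarefree i"
        using q by (metis not_prime_unit power2_eq_square squarefree_def)
      then show "moebius i = 0" by (simp add: moebius_def)
    qed
  qed
  also have "\<dots> = (\<Sum>j \<in> D. moebius j) + (\<Sum>j \<in> D. moebius (q * j))"
    using finD prime_gt_0_nat[OF q(1)]
    by (subst sum.union_disjoint) (auto simp: D_def sum.reindex inj_on_def)
  also have "(\<Sum>j \<in> D. moebius (q * j)) = (\<Sum>j \<in> D. - moebius j)"
    using q(1) assms by (intro sum.cong refl moebius_prime_mult) (auto simp: D_def intro: gr0I)
  finally show ?thesis using False by (simp add: sum_negf)
qed

definition coprime_count :: "nat \<Rightarrow> nat \<Rightarrow> nat" where
  "coprime_count m x = card {k \<in> {1..x}. coprime k m}"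

lemma coprime_count_Suc:
  "coprime_count m (Suc x) = coprime_count m x + (if coprime (Suc x) m then 1 else 0)"
proof -
  have "{k \<in> {1..Suc x}. coprime k m} =
      {k \<in> {1..x}. coprime k m} \<union> (if coprime (Suc x) m then {Suc x} else {})"
    by (auto simp: le_Suc_eq)
  then show ?thesis by (simp add: coprime_count_def)
qed

lemma coprime_count_moebius:
  assumes "m > 0"
  shows "int (coprime_count m x) = (\<Sum>j | j dvd m. moebius j * int (x div j))"
proof (induction x)
  case 0
  then show ?case by (simp add: coprime_count_def)
next
  case (Suc x)
  have fin: "finite {j. j dvd m}" using assms by simp
  have Suc_div: "int (Suc x div j) = int (x div j) + (if j dvd Suc x then 1 else 0)"
    if "j dvd m" for j
  proof -
    have "j > 0" using that assms by (metis dvd_0_left_iff gr0I less_irrefl)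
    then show ?thesis by (simp add: div_Suc dvd_eq_mod_eq_0)
  qed
  have "(\<Sum>j | j dvd m. moebius j * int (Suc x div j)) =
      (\<Sum>j | j dvd m. moebius j * int (x div j) + (if j dvd Suc x then moebius j else 0))"
    by (rule sum.cong) (simp_all add: Suc_div distrib_left)
  also have "\<dots> = (\<Sum>j | j dvd m. moebius j * int (x div j)) +
      (\<Sum>j | j dvd m. if j dvd Suc x then moebius j else 0)"
    by (rule sum.distrib)
  also have "(\<Sum>j | j dvd m. if j dvd Suc x then moebius j else 0) = (\<Sum>j \<in> {j \<in> {j. j dvd m}. j dvd Suc x}. moebius j)"
    by (rule sum.inter_filter[symmetric, OF fin])
  also have "{j \<in> {j. j dvd m}. j dvd Suc x} = {j. j dvd gcd (Suc x) m}"
    by auto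
  also have "(\<Sum>j | j dvd gcd (Suc x) m. moebius j) = (if coprime (Suc x) m then 1 else 0)"
    unfolding coprime_iff_gcd_eq_1 by (rule sum_moebius_divisors) simp
  finally show ?case using Suc by (simp add: coprime_count_Suc)
qed

lemma coprime_count_self: "coprime_count m m = totient m"
proof -
  have "{k \<in> {1..m}. coprime k m} = totatives m" by (auto simp: totatives_def)
  then show ?thesis by (simp add: coprime_count_def totient_def)
qed

lemma coprime_count_mult_add:
  assumes "m > 0"
  shows "coprime_count m (q * m + d) = q * totient m + coprime_count m d"
proof -
  have "int (coprime_count m (q * m + d)) =
      (\<Sum>j | j dvd m. int q * (moebius j * int (m div j)) + moebius j * int (d div j))"
    unfolding coprime_count_moebius[OF assms]
    by (rule sum.cong)
      (auto simp: div_plus_div_distrib_dvd_left dvd_div_mult algebra_simps)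
  also have "\<dots> = int q * int (coprime_count m m) + int (coprime_count m d)"
    by (simp add: sum.distrib coprime_count_moebius[OF assms] sum_distrib_left)
  finally show ?thesis by (simp add: coprime_count_self flip: of_nat_mult of_nat_add)
qed

lemma coprime_count_mult_power:
  assumes "b > 0"
  shows "coprime_count (a * c ^ b) x = coprime_count (a * c) x"
  using assms by (simp add: coprime_count_def)

lemma card_coprime_partners:
  assumes "2 \<le> m" "m \<le> n"
  shows "int (card {k. m \<le> k \<and> k \<le> n \<and> coprime m k}) =
    int (totient m) * (int (n div m) - 1) + int (coprime_count m (n mod m))"
proof -
  have "{k \<in> {1..n}. coprime k m} = {k \<in> {1..m}. coprime k m} \<union> {k. m \<le> k \<and> k \<le> n \<and> coprime m k}"
    using assms by (auto simp: coprime_commute)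
  then have "coprime_count m n = coprime_count m m + card {k. m \<le> k \<and> k \<le> n \<and> coprime m k}"
    unfolding coprime_count_def using assms
    by (subst card_Un_disjoint[symmetric]) (auto intro: finite_subset[of _ "{..n}"])
  moreover have "coprime_count m n = (n div m) * totient m + coprime_count m (n mod m)"
    using assms coprime_count_mult_add[of m "n div m" "n mod m"] by simp
  ultimately have "int (card {k. m \<le> k \<and> k \<le> n \<and> coprime m k}) + int (totient m) =
      int (n div m) * int (totient m) + int (coprime_count m (n mod m))"
    by (simp add: coprime_count_self flip: of_nat_mult of_nat_add)
  then show ?thesis by (simp add: algebra_simps)
qed

lemma multiplicity_le_nat_floor_log:
  fixes p h n :: nat
  assumes "prime p" "0 < h" "h \<le> n"
  shows "multiplicity p h \<le> nat \<lfloor>log (real p) (real n)\<rfloor>"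
proof -
  have "p ^ multiplicity p h \<le> n"
    using assms by (meson dvd_imp_le le_trans multiplicity_dvd)
  then have "real (multiplicity p h) \<le> log (real p) (real n)"
    using assms prime_gt_1_nat[OF assms(1)]
    by (subst le_log_iff) (auto simp: powr_realpow simp flip: of_nat_power)
  then show ?thesis by linarith
qed

lemma multiplicity_eq_card_power_dvd:
  assumes "h \<noteq> 0" "\<not> is_unit p" "multiplicity p h \<le> B"
  shows "multiplicity p h = card {b \<in> {1..B}. p ^ b dvd h}"
proof -
  have "{b \<in> {1..B}. p ^ b dvd h} = {1..multiplicity p h}"
    using assms by (auto simp: power_dvd_iff_le_multiplicity)
  then show ?thesis by simp
qed

definition farey_pairs :: "nat \<Rightarrow> (nat \<times> nat) set" where
  "farey_pairs n = {(h, k). 1 \<le> h \<and> h \<le> k \<and> k \<le> n \<and> coprime h k}"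

lemma finite_farey_pairs: "finite (farey_pairs n)"
  by (rule finite_subset[of _ "{1..n} \<times> {1..n}"]) (auto simp: farey_pairs_def)

lemma card_farey_pairs_numerator_dvd:
  assumes "P > 0"
  shows "card {x \<in> farey_pairs n. P dvd fst x} =
    (\<Sum>a = 1..n div P. card {k. a * P \<le> k \<and> k \<le> n \<and> coprime (a * P) k})"
proof -
  define K where "K a = {k. a * P \<le> k \<and> k \<le> n \<and> coprime (a * P) k}" for a
  have "{x \<in> farey_pairs n. P dvd fst x} = (\<lambda>(a, k). (a * P, k)) ` Sigma {1..n div P} K"
  proof (intro equalityI subsetI)
    fix x assume "x \<in> {x \<in> farey_pairs n. P dvd fst x}"
    then obtain a k where "x = (a * P, k)" "1 \<le> a * P" "a * P \<le> k" "k \<le> n" "coprime (a * P) k"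
      by (auto simp: farey_pairs_def mult.commute)
    then show "x \<in> (\<lambda>(a, k). (a * P, k)) ` Sigma {1..n div P} K"
      using assms by (auto simp: K_def less_eq_div_iff_mult_less_eq intro!: image_eqI[of _ _ "(a, k)"])
  qed (use assms in \<open>auto simp: farey_pairs_def K_def\<close>)
  moreover have "inj_on (\<lambda>(a, k). (a * P, k)) (Sigma {1..n div P} K)"
    using assms by (auto simp: inj_on_def)
  moreover have "finite (K a)" for a
    by (rule finite_subset[of _ "{..n}"]) (auto simp: K_def)
  ultimately show ?thesis
    by (simp add: card_image K_def)
qed

lemma multiplicity_farey_num_prod:
  fixes p n :: nat
  assumes "prime p"
  defines "B \<equiv> nat \<lfloor>log (real p) (real n)\<rfloor>"
  shows "multiplicity p (farey_num_prod n) = (\<Sum>b = 1..B. card {x \<in> farey_pairs n. p ^ b dvd fst x})"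
proof -
  have "multiplicity p (\<Prod>x \<in> farey_pairs n. fst x) = (\<Sum>x \<in> farey_pairs n. multiplicity p (fst x))"
  proof (rule prime_elem_multiplicity_prod_distrib)
    show "0 \<notin> fst ` farey_pairs n"
      unfolding farey_pairs_def by force
  qed (use assms(1) finite_farey_pairs in auto)
  moreover have "farey_num_prod n = (\<Prod>x \<in> farey_pairs n. fst x)"
    unfolding farey_num_prod_def farey_pairs_def by (simp only: case_prod_beta')
  ultimately have "multiplicity p (farey_num_prod n) = (\<Sum>x \<in> farey_pairs n. multiplicity p (fst x))"
    by simp
  also have "\<dots> = (\<Sum>x \<in> farey_pairs n. card {b \<in> {1..B}. p ^ b dvd fst x})"
  proof (rule sum.cong)
    fix x assume "x \<in> farey_pairs n"
    then have "0 < fst x" "fst x \<le> n" by (auto simp: farey_pairs_def)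
    then show "multiplicity p (fst x) = card {b \<in> {1..B}. p ^ b dvd fst x}"
      using assms(1) prime_gt_1_nat[OF assms(1)] multiplicity_le_nat_floor_log[OF assms(1)]
      unfolding B_def by (intro multiplicity_eq_card_power_dvd) simp_all
  qed simp
  also have "\<dots> = (\<Sum>x \<in> farey_pairs n. \<Sum>b = 1..B. of_bool (p ^ b dvd fst x))"
    by (simp add: Int_def)
  also have "\<dots> = (\<Sum>b = 1..B. \<Sum>x \<in> farey_pairs n. of_bool (p ^ b dvd fst x))"
    by (rule sum.swap)
  also have "\<dots> = (\<Sum>b = 1..B. card {x \<in> farey_pairs n. p ^ b dvd fst x})"
    by (simp add: Int_def finite_farey_pairs)
  finally show ?thesis .
qed

lemma card_coprime_partners_prime_power:
  assumes "prime p" "1 \<le> a" "1 \<le> b" "a * p ^ b \<le> n"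
  shows "int (card {k. a * p ^ b \<le> k \<and> k \<le> n \<and> coprime (a * p ^ b) k}) =
    int (totient (a * p ^ b)) * (int (n div (a * p ^ b)) - 1)
    + (\<Sum>j \<in> {j. j dvd a * p}. moebius j * int (n mod (a * p ^ b) div j))"
proof -
  have p: "2 \<le> p" using assms(1) by (rule prime_ge_2_nat)
  moreover have "p \<le> p ^ b" using p assms(3) by (simp add: self_le_power)
  moreover have "p ^ b \<le> a * p ^ b" using assms(2) by simp
  ultimately have "2 \<le> a * p ^ b" by linarith
  then have "int (card {k. a * p ^ b \<le> k \<and> k \<le> n \<and> coprime (a * p ^ b) k}) =
      int (totient (a * p ^ b)) * (int (n div (a * p ^ b)) - 1)
      + int (coprime_count (a * p) (n mod (a * p ^ b)))"
    using assms(4) coprime_count_mult_power[of b a p] assms(3)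
    by (subst card_coprime_partners) simp_all
  also have "int (coprime_count (a * p) (n mod (a * p ^ b))) =
      (\<Sum>j \<in> {j. j dvd a * p}. moebius j * int (n mod (a * p ^ b) div j))"
    using assms(2) p by (intro coprime_count_moebius) simp
  finally show ?thesis .
qed

theorem lemma4p3:
  fixes p n :: nat
  assumes "prime p" and "n \<ge> 1"
  shows "int (multiplicity p (farey_num_prod n)) =
    (\<Sum>b = 1..nat \<lfloor>log (real p) (real n)\<rfloor>.
       \<Sum>a = 1..n div p ^ b.
         let d = n mod (a * p ^ b) in
         int (totient (a * p ^ b)) * (int (n div (a * p ^ b)) - 1)
         + (\<Sum>j \<in> {j. j dvd a * p}. moebius j * int (d div j)))"
proof -
  have "int (multiplicity p (farey_num_prod n)) =
      (\<Sum>b = 1..nat \<lfloor>log (real p) (real n)\<rfloor>. \<Sum>a = 1..n div p ^ b.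
         int (card {k. a * p ^ b \<le> k \<and> k \<le> n \<and> coprime (a * p ^ b) k}))"
    using prime_gt_0_nat[OF assms(1)]
    unfolding multiplicity_farey_num_prod[OF assms(1)] of_nat_sum
    by (intro sum.cong refl) (simp add: card_farey_pairs_numerator_dvd)
  also have "\<dots> = (\<Sum>b = 1..nat \<lfloor>log (real p) (real n)\<rfloor>. \<Sum>a = 1..n div p ^ b.
         let d = n mod (a * p ^ b) in
         int (totient (a * p ^ b)) * (int (n div (a * p ^ b)) - 1)
         + (\<Sum>j \<in> {j. j dvd a * p}. moebius j * int (d div j)))"
  proof (intro sum.cong refl)
    fix b a assume "b \<in> {1..nat \<lfloor>log (real p) (real n)\<rfloor>}" "a \<in> {1..n div p ^ b}"
    moreover have "0 < p ^ b" using prime_gt_0_nat[OF assms(1)] by simp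
    ultimately show "int (card {k. a * p ^ b \<le> k \<and> k \<le> n \<and> coprime (a * p ^ b) k}) = (let d = n mod (a * p ^ b) in
         int (totient (a * p ^ b)) * (int (n div (a * p ^ b)) - 1)
         + (\<Sum>j \<in> {j. j dvd a * p}. moebius j * int (d div j)))"
      unfolding Let_def using assms(1)
      by (intro card_coprime_partners_prime_power) (auto simp: less_eq_div_iff_mult_less_eq)
  qed
  finally show ?thesis .
qed

end
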